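(* Let $D = \bigcup_{k=0}^{5} IPE_k$ be the set of available frequencies, where $IPE_0=\{40000,40070,40140\}$, $IPE_1=\{41000,41070,41140\}$, $IPE_2=\{42000,42070,42140\}$, $IPE_3=\{43000,43070,43140\}$, $IPE_4=\{44000,44070,44140,44210\}$, $IPE_5=\{45000,45070,45140,45210\}$. Let $s$ be a site with exactly 8 transmission paths (paths leaving $s$) and 8 reception paths (paths arriving at $s$), and suppose frequencies $f(t)\in D$ are assigned to these 16 paths such that: (i) any two transmission paths of $s$ satisfy $|f(t)-f(t')|\ge 100$; (ii) any transmission path $t$ and reception path $t'$ of $s$ satisfy $|f(t)-f(t')|\ge 220$; (iii) the 8 reception paths of $s$ receive pairwise distinct frequencies. Then every transmission path of $s$ receives a frequency in $\{40000, 40140, 41000, 41140, 42000, 42140, 43000, 43140\}$, and every reception path of $s$ receives a frequency in $\{44000, 44070, 44140, 44210, 45000, 45070, 45140, 45210\}$.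
   Context: Frequency assignment for a radio network: each link between two sites consists of two paths (one per direction); a path from site $s$ is a transmission path of $s$, a path to site $s$ is a reception path of $s$. Constraints between paths incident to the same site ("co-site" constraints) impose minimum frequency gaps: 100 between two transmitters, 220 between a transmitter and a receiver, and a (small, positive) gap between two receivers. The six sets $IPE_k$ are called inter-planes; $IPE_0,\dots,IPE_3$ are "small" (3 frequencies) and $IPE_4,IPE_5$ are "large" (4 frequencies). A site with 8 links is called a $Cart8$ site. *)

theory Defs
  imports Main
begin

definition IPE :: "nat \<Rightarrow> int set" where
  "IPE k = (if k = 0 then {40000, 40070, 40140}
       else if k = 1 then {41000, 41070, 41140}
       else if k = 2 then {42000, 42070, 42140}
       else if k = 3 then {43000, 43070, 43140}
       else if k = 4 then {44000, 44070, 44140, 44210}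
       else if k = 5 then {45000, 45070, 45140, 45210}
       else {})"

definition D :: "int set" where
  "D = (\<Union>k\<in>{0..5}. IPE k)"

end

theory Submission
  imports Defs
begin

text \<open>
  Every inter-plane lies on the grid \<open>b, b+70, b+140, b+210\<close> with \<open>b = 40000 + 1000 k\<close>.
  Transmitter frequencies are 100 apart, so each inter-plane carries at most two of
  them; and since an inter-plane has diameter at most 210 < 220, no inter-plane carries
  both a transmitter and a receiver. Hence at least four inter-planes are used by the
  eight transmitters, leaving at most two for the eight receivers: their capacity
  forces these two to be the large ones \<open>IPE\<^sub>4, IPE\<^sub>5\<close>, filled completely. The
  transmitters then occupy two frequencies in each small inter-plane
  \<open>{b, b+70, b+140}\<close>, which with gap 100 must be \<open>b\<close> and \<open>b+140\<close>.
\<close>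

definition spaced :: "int \<Rightarrow> int set \<Rightarrow> bool" where
  "spaced d X \<longleftrightarrow> (\<forall>x\<in>X. \<forall>y\<in>X. x \<noteq> y \<longrightarrow> d \<le> \<bar>x - y\<bar>)"

lemma card_inter_le_1_if_spaced:
  fixes X Y :: "int set"
  assumes "spaced d X" "finite Y" "\<forall>x\<in>Y. \<forall>y\<in>Y. \<bar>x - y\<bar> < d"
  shows "card (X \<inter> Y) \<le> 1"
  using assms by (force simp: spaced_def card_le_Suc0_iff_eq)

lemma card_le_2_if_spaced_grid:
  fixes b :: int
  assumes "spaced 100 X" "X \<subseteq> {b, b + 70, b + 140, b + 210}"
  shows "card X \<le> 2"
proof -
  have "X = X \<inter> {b, b + 70} \<union> X \<inter> {b + 140, b + 210}"
    using assms(2) by blast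
  then have "card X \<le> card (X \<inter> {b, b + 70}) + card (X \<inter> {b + 140, b + 210})"
    by (metis card_Un_le)
  also have "\<dots> \<le> 2"
    using card_inter_le_1_if_spaced[OF assms(1), of "{b, b + 70}"]
      card_inter_le_1_if_spaced[OF assms(1), of "{b + 140, b + 210}"] by simp
  finally show ?thesis .
qed

lemma spaced_pair_in_short_grid:
  fixes b :: int
  assumes "spaced 100 X" "X \<subseteq> {b, b + 70, b + 140}" "card X = 2"
  shows "X \<subseteq> {b, b + 140}"
proof
  fix x assume "x \<in> X"
  have "b + 70 \<notin> X"
  proof
    assume mid: "b + 70 \<in> X"
    obtain y where y: "y \<in> X" "y \<noteq> b + 70"
      using \<open>card X = 2\<close> by (auto simp: card_2_iff)
    then have "100 \<le> \<bar>y - (b + 70)\<bar>"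
      using assms(1) mid unfolding spaced_def by blast
    with y assms(2) show False by auto
  qed
  then show "x \<in> {b, b + 140}"
    using \<open>x \<in> X\<close> assms(2) by auto
qed

lemma IPE_subset_grid:
  "IPE k \<subseteq> {40000 + 1000 * int k, 40070 + 1000 * int k, 40140 + 1000 * int k, 40210 + 1000 * int k}"
  by (cases "k \<le> 5") (auto simp: IPE_def le_Suc_eq numeral_eq_Suc)

lemma IPE_small:
  "k \<le> 3 \<Longrightarrow> IPE k = {40000 + 1000 * int k, 40070 + 1000 * int k, 40140 + 1000 * int k}"
  by (auto simp: IPE_def le_Suc_eq numeral_eq_Suc)

lemma card_IPE: "card (IPE k) \<le> (if k \<le> 3 then 3 else 4)"
  by (cases "k \<le> 5") (auto simp: IPE_def le_Suc_eq numeral_eq_Suc)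

lemma finite_IPE [simp]: "finite (IPE k)"
  by (simp add: IPE_def)

lemma IPE_disjoint: "i \<noteq> j \<Longrightarrow> IPE i \<inter> IPE j = {}"
  unfolding IPE_def by auto

lemma IPE_diameter:
  assumes "x \<in> IPE k" "y \<in> IPE k"
  shows "\<bar>x - y\<bar> \<le> 210"
proof -
  have "x \<in> {40000 + 1000 * int k, 40070 + 1000 * int k, 40140 + 1000 * int k, 40210 + 1000 * int k}"
    "y \<in> {40000 + 1000 * int k, 40070 + 1000 * int k, 40140 + 1000 * int k, 40210 + 1000 * int k}"
    using assms IPE_subset_grid[of k] by blast+
  then show ?thesis by auto
qed

lemma IPE_4_5: "IPE 4 \<union> IPE 5 = {44000, 44070, 44140, 44210, 45000, 45070, 45140, 45210}"
  by (auto simp: IPE_def)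

lemma card_eq_sum_IPE:
  assumes "X \<subseteq> D"
  shows "card X = (\<Sum>k\<le>5. card (X \<inter> IPE k))"
proof -
  have "X = (\<Union>k\<le>5. X \<inter> IPE k)"
    using assms by (auto simp: D_def atLeast0AtMost)
  also have "card \<dots> = (\<Sum>k\<le>5. card (X \<inter> IPE k))"
    by (rule card_UN_disjoint) (auto dest: IPE_disjoint)
  finally show ?thesis .
qed

lemma inter_plane_counts:
  fixes a r :: "nat \<Rightarrow> nat"
  assumes "(\<Sum>k\<le>5. a k) = 8" "(\<Sum>k\<le>5. r k) = 8"
    and "\<And>k. a k \<le> 2" "\<And>k. r k \<le> (if k \<le> 3 then 3 else 4)"
    and "\<And>k. a k = 0 \<or> r k = 0"
  shows "a 4 = 0" "a 5 = 0" "\<And>k. k \<le> 3 \<Longrightarrow> a k = 2 \<and> r k = 0"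
proof -
  have sums: "a 0 + a 1 + a 2 + a 3 + a 4 + a 5 = 8" "r 0 + r 1 + r 2 + r 3 + r 4 + r 5 = 8"
    using assms(1,2) by (simp_all add: numeral_eq_Suc)
  have caps: "r 0 \<le> 3" "r 1 \<le> 3" "r 2 \<le> 3" "r 3 \<le> 3" "r 4 \<le> 4" "r 5 \<le> 4"
    using assms(4)[of 0] assms(4)[of 1] assms(4)[of 2] assms(4)[of 3] assms(4)[of 4]
      assms(4)[of 5] by simp_all
  have "a 4 = 0 \<and> a 5 = 0 \<and> a 0 = 2 \<and> a 1 = 2 \<and> a 2 = 2 \<and> a 3 = 2 \<and>
      r 0 = 0 \<and> r 1 = 0 \<and> r 2 = 0 \<and> r 3 = 0"
    using sums caps assms(3)[of 0] assms(3)[of 1] assms(3)[of 2] assms(3)[of 3] assms(3)[of 4]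
      assms(3)[of 5] assms(5)[of 0] assms(5)[of 1] assms(5)[of 2] assms(5)[of 3]
      assms(5)[of 4] assms(5)[of 5]
    by (elim disjE; simp)
  then show "a 4 = 0" "a 5 = 0" "\<And>k. k \<le> 3 \<Longrightarrow> a k = 2 \<and> r k = 0"
    by (auto simp: le_Suc_eq numeral_eq_Suc)
qed

lemma Cart8_frequency_sets:
  fixes A B :: "int set"
  assumes "A \<subseteq> D" "B \<subseteq> D" "card A = 8" "card B = 8" "spaced 100 A"
    and "\<forall>x\<in>A. \<forall>y\<in>B. 220 \<le> \<bar>x - y\<bar>"
  shows "A \<subseteq> {40000, 40140, 41000, 41140, 42000, 42140, 43000, 43140}"
    and "B \<subseteq> {44000, 44070, 44140, 44210, 45000, 45070, 45140, 45210}"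
proof -
  define a where "a k = card (A \<inter> IPE k)" for k
  define r where "r k = card (B \<inter> IPE k)" for k
  have spaced_plane: "spaced 100 (A \<inter> IPE k)" for k
    using assms(5) by (simp add: spaced_def)
  have "a k = 0 \<or> r k = 0" for k
  proof (rule ccontr)
    assume "\<not> (a k = 0 \<or> r k = 0)"
    then obtain x y where "x \<in> A \<inter> IPE k" "y \<in> B \<inter> IPE k"
      by (auto simp: a_def r_def)
    then show False
      using assms(6) IPE_diameter[of x k y] by force
  qed
  moreover have "a k \<le> 2" for k
    unfolding a_def using spaced_plane IPE_subset_grid[of k]
    by (intro card_le_2_if_spaced_grid[where b = "40000 + 1000 * int k"]) auto
  moreover have "r k \<le> (if k \<le> 3 then 3 else 4)" for k
    unfolding r_def by (metis card_IPE card_mono finite_IPE inf_le2 order_trans)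
  ultimately have counts: "a 4 = 0" "a 5 = 0" "\<And>k. k \<le> 3 \<Longrightarrow> a k = 2 \<and> r k = 0"
    using inter_plane_counts[of a r] card_eq_sum_IPE[OF assms(1)] card_eq_sum_IPE[OF assms(2)]
      assms(3,4) by (simp_all add: a_def r_def)
  have planes: "\<exists>k\<le>5. x \<in> IPE k" if "x \<in> D" for x
    using that by (auto simp: D_def)
  show "A \<subseteq> {40000, 40140, 41000, 41140, 42000, 42140, 43000, 43140}"
  proof
    fix x assume "x \<in> A"
    then obtain k where k: "k \<le> 5" "x \<in> A \<inter> IPE k"
      using planes assms(1) by blast
    then have "k \<noteq> 4" "k \<noteq> 5"
      using counts(1,2) by (auto simp: a_def)
    with k have "k \<le> 3" by simp
    then have "A \<inter> IPE k \<subseteq> {40000 + 1000 * int k, 40140 + 1000 * int k}"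
      using spaced_pair_in_short_grid[OF spaced_plane[of k], where b = "40000 + 1000 * int k"] counts(3)
      by (simp add: IPE_small a_def)
    with k \<open>k \<le> 3\<close> show "x \<in> {40000, 40140, 41000, 41140, 42000, 42140, 43000, 43140}"
      by (auto simp: le_Suc_eq numeral_eq_Suc)
  qed
  show "B \<subseteq> {44000, 44070, 44140, 44210, 45000, 45070, 45140, 45210}"
  proof
    fix y assume "y \<in> B"
    then obtain k where k: "k \<le> 5" "y \<in> B \<inter> IPE k"
      using planes assms(2) by blast
    then have "\<not> k \<le> 3"
      using counts(3)[of k] card_0_eq[of "B \<inter> IPE k"] by (auto simp: r_def)
    with k show "y \<in> {44000, 44070, 44140, 44210, 45000, 45070, 45140, 45210}"
      by (auto simp: le_Suc_eq numeral_eq_Suc simp flip: IPE_4_5)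
  qed
qed

theorem mainTheorem1:
  fixes T R :: "'p set" and f :: "'p \<Rightarrow> int"
  assumes "finite T" "finite R" "card T = 8" "card R = 8" "T \<inter> R = {}"
    and "\<forall>p\<in>T \<union> R. f p \<in> D"
    and "\<forall>t\<in>T. \<forall>t'\<in>T. t \<noteq> t' \<longrightarrow> \<bar>f t - f t'\<bar> \<ge> 100"
    and "\<forall>t\<in>T. \<forall>t'\<in>R. \<bar>f t - f t'\<bar> \<ge> 220"
    and "inj_on f R"
  shows "(\<forall>t\<in>T. f t \<in> {40000, 40140, 41000, 41140, 42000, 42140, 43000, 43140}) \<and>
         (\<forall>r\<in>R. f r \<in> {44000, 44070, 44140, 44210, 45000, 45070, 45140, 45210})"
proof -
  have "inj_on f T"
    using assms(7) by (force simp: inj_on_def)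
  then have "card (f ` T) = 8" "card (f ` R) = 8"
    using assms(3,4,9) by (simp_all add: card_image)
  moreover have "spaced 100 (f ` T)"
    using assms(7) by (force simp: spaced_def)
  moreover have "f ` T \<subseteq> D" "f ` R \<subseteq> D"
    using assms(6) by auto
  ultimately show ?thesis
    using Cart8_frequency_sets[of "f ` T" "f ` R"] assms(8) by blast
qed

end
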